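(* Let $P\subset\mathbb{R}^n$ be the moment polytope of a compact symplectic toric manifold. If the toric fiber $L(\mathbf{u})$ over a point $\mathbf{u}\in\mathrm{Int}(P)$ is strongly bulk-balanced, then $\mathbf{u}\in\mathrm{Trop}(P,\mathbf{m})$ for every $\mathbf{m}\in\mathbb{Z}^n$.
   Context: $P=\bigcap_{j=1}^m\{\mathbf{u}:\ell_j(\mathbf{u})\ge0\}$, $\ell_j(\mathbf{u})=\langle\mathbf{u},\mathbf{v}_j\rangle-\lambda_j$, $\mathbf{v}_j\in\mathbb{Z}^n$ primitive inward facet normals, half-spaces non-redundant. $\mathrm{Trop}(P,\mathbf{m})$ is the non-differentiable locus of $\mathbf{u}\mapsto\min\{\ell_j(\mathbf{u}):\langle\mathbf{m},\mathbf{v}_j\rangle\neq0\}$, i.e. where the minimum is attained by at least two distinct such indices; $\mathrm{Trop}(P,\mathbf{0})=\mathbb{R}^n$. Strongly bulk-balanced: let $S_1<S_2<\cdots$ be the distinct values of $\ell_j(\mathbf{u})$, $I_l=\{j:\ell_j(\mathbf{u})=S_l\}$, $A^\perp_l=\mathrm{span}_\mathbb{R}\{\mathbf{v}_j:j\in I_1\cup\dots\cup I_l\}$, $d_l=\dim A^\perp_l-\dim A^\perp_{l-1}$, $\kappa$ minimal with $A^\perp_\kappa=\mathbb{R}^n$. Choose $e^*_{r,s}\in\mathbb{Q}^n$ ($1\le r\le\kappa$, $1\le s\le d_r$) such that $\{e^*_{r,s}:r\le l\}$ is a $\mathbb{Q}$-basis of $A^\perp_l\cap\mathbb{Q}^n$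 for all $l$ and each $\mathbf{v}_j\in\bigoplus\mathbb{Z}e^*_{r,s}$; with $\mathbf{v}_j=\sum v_j^{r,s}e^*_{r,s}$ set $\mathbf{y}^{\mathbf{v}_j}=\prod y_{r,s}^{v_j^{r,s}}$. For $c\in(\mathbb{C}^* )^m$ let $F_l^c=\sum_{j\in I_l}c_j\mathbf{y}^{\mathbf{v}_j}$. $L(\mathbf{u})$ is strongly bulk-balanced if for some $c$ the system $y_{l,s}\partial F^c_l/\partial y_{l,s}=0$ ($1\le l\le\kappa$, $1\le s\le d_l$) has a solution in $(\mathbb{C}^* )^n$; the existence of such a solution does not depend on the choice of the $e^*_{r,s}$. *)

theory Defs
  imports "HOL-Analysis.Analysis"
begin

definition vreal :: "(nat \<Rightarrow> int^'n) \<Rightarrow> nat \<Rightarrow> real^'n" where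
  "vreal v j = (\<chi> k. real_of_int (v j $ k))"

definition ell :: "(nat \<Rightarrow> int^'n) \<Rightarrow> (nat \<Rightarrow> real) \<Rightarrow> nat \<Rightarrow> real^'n \<Rightarrow> real" where
  "ell v lam j u = u \<bullet> vreal v j - lam j"

definition polyP :: "nat \<Rightarrow> (nat \<Rightarrow> int^'n) \<Rightarrow> (nat \<Rightarrow> real) \<Rightarrow> (real^'n) set" where
  "polyP N v lam = {u. \<forall>j<N. ell v lam j u \<ge> 0}"

text \<open>Delzant polytope (= moment polytope of a compact symplectic toric manifold,
  by Delzant's theorem): compact, full-dimensional, primitive inward normals,
  non-redundant half-spaces, and at each vertex exactly n facets meet whose normals
  form a Z-basis of Z^n.\<close>

definition delzant :: "nat \<Rightarrow> (nat \<Rightarrow> int^'n) \<Rightarrow> (nat \<Rightarrow> real) \<Rightarrow> bool" where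
  "delzant N v lam \<longleftrightarrow>
     bounded (polyP N v lam) \<and> interior (polyP N v lam) \<noteq> {} \<and>
     (\<forall>j<N. \<forall>d::int. (\<forall>k. d dvd v j $ k) \<longrightarrow> \<bar>d\<bar> = 1) \<and>
     (\<forall>j<N. {u. \<forall>i<N. i \<noteq> j \<longrightarrow> ell v lam i u \<ge> 0} \<noteq> polyP N v lam) \<and>
     (\<forall>x. x extreme_point_of (polyP N v lam) \<longrightarrow>
        card {j. j < N \<and> ell v lam j x = 0} = CARD('n) \<and>
        (\<forall>w::int^'n. \<exists>c::nat \<Rightarrow> int.
            w = (\<Sum>j\<in>{j. j < N \<and> ell v lam j x = 0}. c j *s v j)))"

definition trop :: "nat \<Rightarrow> (nat \<Rightarrow> int^'n) \<Rightarrow> (nat \<Rightarrow> real) \<Rightarrow> int^'n \<Rightarrow> (real^'n) set" where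
  "trop N v lam m =
     (if m = 0 then UNIV else
      {u. let Jm = {j. j < N \<and> (\<Sum>k\<in>UNIV. m $ k * v j $ k) \<noteq> 0} in
          \<exists>j\<in>Jm. \<exists>j'\<in>Jm. j \<noteq> j' \<and> ell v lam j u = ell v lam j' u \<and>
             (\<forall>i\<in>Jm. ell v lam j u \<le> ell v lam i u)})"

text \<open>Level data at u: S_1 < S_2 < ... distinct values of ell_j(u) (1-based),
  I_l, A^perp_l, kappa.\<close>

definition Sval :: "nat \<Rightarrow> (nat \<Rightarrow> int^'n) \<Rightarrow> (nat \<Rightarrow> real) \<Rightarrow> real^'n \<Rightarrow> nat \<Rightarrow> real" where
  "Sval N v lam u l = sorted_list_of_set ((\<lambda>j. ell v lam j u) ` {..<N}) ! (l - 1)"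

definition Ilev :: "nat \<Rightarrow> (nat \<Rightarrow> int^'n) \<Rightarrow> (nat \<Rightarrow> real) \<Rightarrow> real^'n \<Rightarrow> nat \<Rightarrow> nat set" where
  "Ilev N v lam u l =
     (if 1 \<le> l \<and> l \<le> card ((\<lambda>j. ell v lam j u) ` {..<N})
      then {j. j < N \<and> ell v lam j u = Sval N v lam u l} else {})"

definition Aperp :: "nat \<Rightarrow> (nat \<Rightarrow> int^'n) \<Rightarrow> (nat \<Rightarrow> real) \<Rightarrow> real^'n \<Rightarrow> nat \<Rightarrow> (real^'n) set" where
  "Aperp N v lam u l = span (vreal v ` {j. \<exists>r\<in>{1..l}. j \<in> Ilev N v lam u r})"

definition kappa :: "nat \<Rightarrow> (nat \<Rightarrow> int^'n) \<Rightarrow> (nat \<Rightarrow> real) \<Rightarrow> real^'n \<Rightarrow> nat" where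
  "kappa N v lam u = (LEAST l. Aperp N v lam u l = UNIV)"

text \<open>Adapted basis: the basis vectors e*_{r,s} are indexed by i :: 'n, with
  lev i = r the filtration level; {e_i : lev i \<le> l} is a Q-basis of
  A^perp_l \<inter> Q^n, and v_j = \<Sum>_i kc j i e_i with integer kc.\<close>

definition adapted_basis ::
  "nat \<Rightarrow> (nat \<Rightarrow> int^'n) \<Rightarrow> (nat \<Rightarrow> real) \<Rightarrow> real^'n \<Rightarrow>
   ('n \<Rightarrow> real^'n) \<Rightarrow> ('n \<Rightarrow> nat) \<Rightarrow> (nat \<Rightarrow> 'n \<Rightarrow> int) \<Rightarrow> bool" where
  "adapted_basis N v lam u e lev kc \<longleftrightarrow>
     (\<forall>i k. e i $ k \<in> \<rat>) \<and>
     (\<forall>i. 1 \<le> lev i \<and> lev i \<le> kappa N v lam u) \<and>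
     (\<forall>l\<in>{1..kappa N v lam u}.
        (\<forall>i. lev i \<le> l \<longrightarrow> e i \<in> Aperp N v lam u l) \<and>
        (\<forall>q::'n \<Rightarrow> real. (\<forall>i. lev i \<le> l \<longrightarrow> q i \<in> \<rat>) \<and>
             (\<Sum>i\<in>{i. lev i \<le> l}. q i *\<^sub>R e i) = 0 \<longrightarrow> (\<forall>i. lev i \<le> l \<longrightarrow> q i = 0)) \<and>
        (\<forall>w. (\<forall>k. w $ k \<in> \<rat>) \<and> w \<in> Aperp N v lam u l \<longrightarrow>
             (\<exists>q::'n \<Rightarrow> real. (\<forall>i. lev i \<le> l \<longrightarrow> q i \<in> \<rat>) \<and>
                 w = (\<Sum>i\<in>{i. lev i \<le> l}. q i *\<^sub>R e i)))) \<and>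
     (\<forall>j<N. vreal v j = (\<Sum>i\<in>UNIV. real_of_int (kc j i) *\<^sub>R e i))"

definition Fpot :: "nat \<Rightarrow> (nat \<Rightarrow> int^'n) \<Rightarrow> (nat \<Rightarrow> real) \<Rightarrow> real^'n \<Rightarrow>
   (nat \<Rightarrow> 'n \<Rightarrow> int) \<Rightarrow> nat \<Rightarrow> (nat \<Rightarrow> complex) \<Rightarrow> ('n \<Rightarrow> complex) \<Rightarrow> complex" where
  "Fpot N v lam u kc l c y = (\<Sum>j\<in>Ilev N v lam u l. c j * (\<Prod>i\<in>UNIV. y i powi kc j i))"

definition strongly_bulk_balanced ::
  "nat \<Rightarrow> (nat \<Rightarrow> int^'n) \<Rightarrow> (nat \<Rightarrow> real) \<Rightarrow> real^'n \<Rightarrow> bool" where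
  "strongly_bulk_balanced N v lam u \<longleftrightarrow>
     (\<exists>e lev kc. adapted_basis N v lam u e lev kc \<and>
        (\<exists>(c::nat \<Rightarrow> complex) (y::'n \<Rightarrow> complex).
           (\<forall>j<N. c j \<noteq> 0) \<and> (\<forall>i. y i \<noteq> 0) \<and>
           (\<forall>i. y i * deriv (\<lambda>z. Fpot N v lam u kc (lev i) c (y(i := z))) (y i) = 0)))"

end

theory Submission imports Defs begin

text \<open>If u is not in Trop(P,m), then m \<noteq> 0 and the minimum of ell_j(u) over the facets
  with <m,v_j> \<noteq> 0 is attained at a single facet j0; let I_l be its level. Every facet of a
  lower level is orthogonal to m, hence so is A^perp_(l-1) and every adapted basis vector of
  level < l, while the normals in I_l have no components of level > l. Pairing the critical
  point equations y_i dF_l/dy_i = 0 (lev i = l) with m therefore gives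
  Sum_(j in I_l) c_j y^(v_j) <m,v_j> = 0, yet only the term of j0 is nonzero.\<close>

lemma polyP_eq_INT: "polyP N v lam = (\<Inter>j\<in>{..<N}. {u. lam j \<le> u \<bullet> vreal v j})"
  unfolding polyP_def ell_def by auto

lemma closed_polyP: "closed (polyP N v lam)"
  unfolding polyP_eq_INT
proof (intro closed_INT ballI)
  fix j show "closed {u. lam j \<le> u \<bullet> vreal v j}"
    using closed_halfspace_ge[of "lam j" "vreal v j"] by (simp add: inner_commute)
qed

lemma convex_polyP: "convex (polyP N v lam)"
  unfolding polyP_eq_INT
proof (intro convex_INT ballI)
  fix j show "convex {u. lam j \<le> u \<bullet> vreal v j}"
    using convex_halfspace_ge[of "lam j" "vreal v j"] by (simp add: inner_commute)
qed

lemma inner_vreal: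
  "(\<chi> k. real_of_int (m $ k)) \<bullet> vreal v j = real_of_int (\<Sum>k\<in>UNIV. m $ k * v j $ k)"
  by (simp add: vreal_def inner_vec_def)

text \<open>The normals at a vertex span \<open>\<int>\<^sup>n\<close>, so a vector orthogonal to all of them,
  in particular to itself, vanishes.\<close>

lemma delzant_normal_pairing_nonzero:
  fixes v :: "nat \<Rightarrow> int^'n" and m :: "int^'n"
  assumes "delzant N v lam" "m \<noteq> 0"
  shows "\<exists>j<N. (\<Sum>k\<in>UNIV. m $ k * v j $ k) \<noteq> 0"
proof (rule ccontr)
  assume orth: "\<not> ?thesis"
  have "compact (polyP N v lam)"
    using assms(1) closed_polyP unfolding delzant_def by (simp add: compact_eq_bounded_closed)
  moreover have "polyP N v lam \<noteq> {}"
    using assms(1) interior_subset unfolding delzant_def by blast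
  ultimately obtain x where "x extreme_point_of (polyP N v lam)"
    using extreme_point_exists_convex convex_polyP by blast
  then obtain c :: "nat \<Rightarrow> int" where c: "m = (\<Sum>j\<in>{j. j < N \<and> ell v lam j x = 0}. c j *s v j)"
    using assms(1) unfolding delzant_def by blast
  let ?J = "{j. j < N \<and> ell v lam j x = 0}"
  have mk: "m $ k = (\<Sum>j\<in>?J. c j * v j $ k)" for k
    by (subst c) simp
  have "(\<Sum>k\<in>UNIV. m $ k * m $ k) = (\<Sum>k\<in>UNIV. \<Sum>j\<in>?J. c j * (m $ k * v j $ k))"
    by (subst (2) mk) (simp add: sum_distrib_left mult.commute mult.left_commute)
  also have "\<dots> = (\<Sum>j\<in>?J. c j * (\<Sum>k\<in>UNIV. m $ k * v j $ k))"
    by (subst sum.swap) (simp add: sum_distrib_left)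
  also have "\<dots> = 0" using orth by auto
  finally have "(\<Sum>k\<in>UNIV. m $ k * m $ k) = 0" .
  hence "\<forall>k. m $ k * m $ k = 0"
    using sum_nonneg_eq_0_iff[of UNIV "\<lambda>k. m $ k * m $ k"] by simp
  hence "m = 0" by (simp add: vec_eq_iff)
  thus False using assms(2) by simp
qed

lemma unique_minimiser_if_notin_trop:
  assumes "delzant N v lam" "u \<notin> trop N v lam m"
  obtains j0 where "j0 < N" "(\<Sum>k\<in>UNIV. m $ k * v j0 $ k) \<noteq> 0"
    "\<And>j. \<lbrakk>j < N; j \<noteq> j0; ell v lam j u \<le> ell v lam j0 u\<rbrakk> \<Longrightarrow> (\<Sum>k\<in>UNIV. m $ k * v j $ k) = 0"
proof -
  have "m \<noteq> 0" using assms(2) by (auto simp: trop_def)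
  define Jm where "Jm = {j. j < N \<and> (\<Sum>k\<in>UNIV. m $ k * v j $ k) \<noteq> 0}"
  have "Jm \<noteq> {}" using delzant_normal_pairing_nonzero[OF assms(1) \<open>m \<noteq> 0\<close>] Jm_def by auto
  moreover have "finite Jm" unfolding Jm_def by auto
  ultimately have "Min ((\<lambda>j. ell v lam j u) ` Jm) \<in> (\<lambda>j. ell v lam j u) ` Jm" by simp
  then obtain j0 where j0: "j0 \<in> Jm" and j0_min: "ell v lam j0 u = Min ((\<lambda>j. ell v lam j u) ` Jm)"
    by force
  have min: "ell v lam j0 u \<le> ell v lam i u" if "i \<in> Jm" for i
    unfolding j0_min using \<open>finite Jm\<close> that by simp
  show thesis
  proof (rule that)
    show "j0 < N" "(\<Sum>k\<in>UNIV. m $ k * v j0 $ k) \<noteq> 0" using j0 Jm_def by auto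
    fix j assume j: "j < N" "j \<noteq> j0" "ell v lam j u \<le> ell v lam j0 u"
    show "(\<Sum>k\<in>UNIV. m $ k * v j $ k) = 0"
    proof (rule ccontr)
      assume "(\<Sum>k\<in>UNIV. m $ k * v j $ k) \<noteq> 0"
      hence "j \<in> Jm" "ell v lam j u = ell v lam j0 u" using j min unfolding Jm_def by force+
      hence "\<exists>a\<in>Jm. \<exists>b\<in>Jm. a \<noteq> b \<and> ell v lam a u = ell v lam b u \<and>
          (\<forall>i\<in>Jm. ell v lam a u \<le> ell v lam i u)"
        using j0 min j(2) by metis
      hence "u \<in> trop N v lam m" using \<open>m \<noteq> 0\<close> unfolding trop_def Let_def Jm_def by simp
      thus False using assms(2) by simp
    qed
  qed
qed

lemma level_of_value:
  assumes "mu \<in> (\<lambda>j. ell v lam j u) ` {..<N}"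
  obtains l where "Ilev N v lam u l = {j. j < N \<and> ell v lam j u = mu}"
    "\<And>r j. \<lbrakk>r < l; j \<in> Ilev N v lam u r\<rbrakk> \<Longrightarrow> ell v lam j u < mu"
proof -
  let ?V = "(\<lambda>j. ell v lam j u) ` {..<N}"
  define xs where "xs = sorted_list_of_set ?V"
  have setxs: "set xs = ?V" and len: "length xs = card ?V" unfolding xs_def by simp_all
  have sorted: "sorted_wrt (<) xs" unfolding xs_def by (rule strict_sorted_list_of_set)
  obtain p where p: "p < length xs" "xs ! p = mu" using assms setxs by (metis in_set_conv_nth)
  have S: "Sval N v lam u r = xs ! (r - 1)" for r unfolding Sval_def xs_def by simp
  show ?thesis
  proof (rule that[of "Suc p"])
    show "Ilev N v lam u (Suc p) = {j. j < N \<and> ell v lam j u = mu}"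
      unfolding Ilev_def S using p len by simp
    fix r j assume r: "r < Suc p" and j: "j \<in> Ilev N v lam u r"
    have r1: "1 \<le> r" using j unfolding Ilev_def by (simp split: if_splits)
    have "ell v lam j u = xs ! (r - 1)" using j unfolding Ilev_def S by (simp split: if_splits)
    also have "\<dots> < xs ! p" using sorted_wrt_nth_less[OF sorted, of "r - 1" p] r r1 p by auto
    finally show "ell v lam j u < mu" using p by simp
  qed
qed

lemma Ilev_subset_lessThan: "Ilev N v lam u r \<subseteq> {..<N}"
  unfolding Ilev_def by auto

lemma euler_deriv_laurent_sum:
  fixes y :: "'n::finite \<Rightarrow> complex" and K :: "nat \<Rightarrow> 'n \<Rightarrow> int"
  assumes "\<forall>k. y k \<noteq> 0" "finite J"
  shows "y i * deriv (\<lambda>z. \<Sum>j\<in>J. c j * (\<Prod>k\<in>UNIV. (y(i := z)) k powi K j k)) (y i)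
       = (\<Sum>j\<in>J. c j * of_int (K j i) * (\<Prod>k\<in>UNIV. y k powi K j k))"
proof -
  define P where "P j = (\<Prod>k\<in>UNIV-{i}. y k powi K j k)" for j
  have eq: "(\<lambda>z. \<Sum>j\<in>J. c j * (\<Prod>k\<in>UNIV. (y(i := z)) k powi K j k))
         = (\<lambda>z. \<Sum>j\<in>J. c j * (z powi K j i * P j))"
    unfolding P_def by (intro ext sum.cong refl arg_cong2[where f="(*)"]) (simp add: prod.remove[of UNIV i])
  have d: "((\<lambda>z. \<Sum>j\<in>J. c j * (z powi K j i * P j)) has_field_derivative
      (\<Sum>j\<in>J. c j * (of_int (K j i) * y i powi (K j i - 1) * 1 * P j))) (at (y i))"
    using assms by (auto intro!: derivative_eq_intros simp: mult_ac)
  have "y i * (\<Sum>j\<in>J. c j * (of_int (K j i) * y i powi (K j i - 1) * 1 * P j))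
      = (\<Sum>j\<in>J. c j * of_int (K j i) * (y i * y i powi (K j i - 1) * P j))"
    by (simp add: sum_distrib_left mult_ac)
  also have "\<dots> = (\<Sum>j\<in>J. c j * of_int (K j i) * (y i powi K j i * P j))"
    using assms(1) by (simp add: power_int_diff)
  also have "\<dots> = (\<Sum>j\<in>J. c j * of_int (K j i) * (\<Prod>k\<in>UNIV. y k powi K j k))"
    unfolding P_def by (simp add: prod.remove[of UNIV i])
  finally show ?thesis unfolding eq using DERIV_imp_deriv[OF d] by simp
qed

lemma adapted_basis_lev_bounds:
  assumes "adapted_basis N v lam u e lev kc"
  shows "1 \<le> lev i \<and> lev i \<le> kappa N v lam u"
  using assms unfolding adapted_basis_def by blast

lemma adapted_basis_mem_Aperp:
  assumes "adapted_basis N v lam u e lev kc"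
  shows "e i \<in> Aperp N v lam u (lev i)"
proof -
  have "lev i \<in> {1..kappa N v lam u}" using adapted_basis_lev_bounds[OF assms] by simp
  with assms show ?thesis unfolding adapted_basis_def by blast
qed

lemma adapted_basis_normal_expansion:
  assumes "adapted_basis N v lam u e lev kc" "j < N"
  shows "vreal v j = (\<Sum>i\<in>UNIV. real_of_int (kc j i) *\<^sub>R e i)"
  using assms unfolding adapted_basis_def by blast

lemma adapted_basis_rational_expansion:
  assumes "adapted_basis N v lam u e lev kc" "l \<in> {1..kappa N v lam u}"
    and "\<forall>k. w $ k \<in> \<rat>" "w \<in> Aperp N v lam u l"
  obtains q where "\<forall>i. lev i \<le> l \<longrightarrow> q i \<in> \<rat>" "w = (\<Sum>i\<in>{i. lev i \<le> l}. q i *\<^sub>R e i)"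
  using assms unfolding adapted_basis_def by blast

lemma adapted_basis_independent:
  assumes "adapted_basis N v lam u e lev kc"
    and "\<forall>i. q i \<in> \<rat>" "(\<Sum>i\<in>UNIV. q i *\<^sub>R e i) = 0"
  shows "q i = 0"
proof -
  let ?ka = "kappa N v lam u"
  have all: "{i. lev i \<le> ?ka} = UNIV" using adapted_basis_lev_bounds[OF assms(1)] by auto
  have "?ka \<in> {1..?ka}" using adapted_basis_lev_bounds[OF assms(1), of i] by simp
  with assms(1) have "\<forall>q. (\<forall>i. lev i \<le> ?ka \<longrightarrow> q i \<in> \<rat>) \<and>
      (\<Sum>i\<in>{i. lev i \<le> ?ka}. q i *\<^sub>R e i) = 0 \<longrightarrow> (\<forall>i. lev i \<le> ?ka \<longrightarrow> q i = 0)"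
    unfolding adapted_basis_def by blast
  thus ?thesis using assms(2,3) adapted_basis_lev_bounds[OF assms(1)] unfolding all by blast
qed

lemma adapted_basis_coeff_eq_0:
  assumes ab: "adapted_basis N v lam u e lev kc"
    and jI: "j \<in> Ilev N v lam u l" and above: "l < lev i"
  shows "kc j i = 0"
proof -
  have jN: "j < N" and l1: "1 \<le> l" using jI unfolding Ilev_def by (auto split: if_splits)
  have "l \<in> {1..kappa N v lam u}" using l1 above adapted_basis_lev_bounds[OF ab, of i] by simp
  moreover have "\<forall>k. vreal v j $ k \<in> \<rat>" by (simp add: vreal_def)
  moreover have "vreal v j \<in> Aperp N v lam u l"
    unfolding Aperp_def using jI l1 by (intro span_base imageI) auto
  ultimately obtain q where q: "\<forall>k. lev k \<le> l \<longrightarrow> q k \<in> \<rat>"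
    "vreal v j = (\<Sum>k\<in>{k. lev k \<le> l}. q k *\<^sub>R e k)"
    by (rule adapted_basis_rational_expansion[OF ab])
  define q' where "q' k = (if lev k \<le> l then q k else 0) - real_of_int (kc j k)" for k
  have "(\<Sum>k\<in>UNIV. (if lev k \<le> l then q k else 0) *\<^sub>R e k) = vreal v j"
    unfolding q(2)
    by (simp add: sum.inter_filter[symmetric] if_distrib[of "\<lambda>t. t *\<^sub>R _"] cong: if_cong)
  hence "(\<Sum>k\<in>UNIV. q' k *\<^sub>R e k) = 0"
    unfolding q'_def using adapted_basis_normal_expansion[OF ab jN]
    by (simp add: scaleR_diff_left sum_subtractf)
  moreover have "\<forall>k. q' k \<in> \<rat>" using q(1) unfolding q'_def by auto
  ultimately have "q' i = 0" using adapted_basis_independent[OF ab] by blast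
  thus ?thesis using above unfolding q'_def by simp
qed

lemma adapted_basis_orthogonal_below:
  assumes ab: "adapted_basis N v lam u e lev kc"
    and lower: "\<And>r j. \<lbrakk>r < l; j \<in> Ilev N v lam u r\<rbrakk> \<Longrightarrow> w \<bullet> vreal v j = 0"
    and "lev i < l"
  shows "w \<bullet> e i = 0"
proof -
  have "orthogonal w (e i)"
    using adapted_basis_mem_Aperp[OF ab, of i] unfolding Aperp_def
  proof (rule orthogonal_to_span)
    fix z assume "z \<in> vreal v ` {j. \<exists>r\<in>{1..lev i}. j \<in> Ilev N v lam u r}"
    then obtain j r where z: "z = vreal v j" and "r \<le> lev i" and jI: "j \<in> Ilev N v lam u r" by auto
    hence "w \<bullet> z = 0" using lower[of r j] \<open>lev i < l\<close> by simp
    thus "orthogonal w z" by (simp add: orthogonal_def)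
  qed
  thus ?thesis by (simp add: orthogonal_def)
qed

lemma critical_level_pairing_eq_0:
  fixes y :: "'n::finite \<Rightarrow> complex"
  assumes ab: "adapted_basis N v lam u e lev kc"
    and yne: "\<forall>i. y i \<noteq> 0"
    and crit: "\<forall>i. y i * deriv (\<lambda>z. Fpot N v lam u kc (lev i) c (y(i := z))) (y i) = 0"
    and below: "\<And>i. lev i < l \<Longrightarrow> w \<bullet> e i = 0"
  shows "(\<Sum>j\<in>Ilev N v lam u l. c j * (\<Prod>i\<in>UNIV. y i powi kc j i) * of_real (w \<bullet> vreal v j)) = 0"
proof -
  let ?I = "Ilev N v lam u l"
  define Y where "Y j = (\<Prod>i\<in>UNIV. y i powi kc j i)" for j
  have finI: "finite ?I" using finite_subset[OF Ilev_subset_lessThan] by blast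
  have crit_l: "(\<Sum>j\<in>?I. c j * of_int (kc j i) * Y j) = 0" if "lev i = l" for i
  proof -
    from crit[rule_format, of i] have "y i * deriv (\<lambda>z. Fpot N v lam u kc l c (y(i := z))) (y i) = 0"
      unfolding that .
    thus ?thesis unfolding Fpot_def Y_def euler_deriv_laurent_sum[OF yne finI] .
  qed
  have pairing: "w \<bullet> vreal v j = (\<Sum>i\<in>UNIV. if lev i = l then real_of_int (kc j i) * (w \<bullet> e i) else 0)"
    if jI: "j \<in> ?I" for j
  proof -
    have "vreal v j = (\<Sum>i\<in>UNIV. real_of_int (kc j i) *\<^sub>R e i)"
      using adapted_basis_normal_expansion[OF ab] jI Ilev_subset_lessThan by blast
    hence "w \<bullet> vreal v j = (\<Sum>i\<in>UNIV. real_of_int (kc j i) * (w \<bullet> e i))"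
      by (simp add: inner_sum_right)
    also have "\<dots> = (\<Sum>i\<in>UNIV. if lev i = l then real_of_int (kc j i) * (w \<bullet> e i) else 0)"
    proof (intro sum.cong refl)
      fix i
      consider "lev i < l" | "lev i = l" | "l < lev i" by linarith
      thus "real_of_int (kc j i) * (w \<bullet> e i) = (if lev i = l then real_of_int (kc j i) * (w \<bullet> e i) else 0)"
        by cases (auto simp: below adapted_basis_coeff_eq_0[OF ab jI])
    qed
    finally show ?thesis .
  qed
  have "(\<Sum>j\<in>?I. c j * Y j * of_real (w \<bullet> vreal v j))
      = (\<Sum>j\<in>?I. \<Sum>i\<in>UNIV. c j * Y j * (if lev i = l then of_int (kc j i) * of_real (w \<bullet> e i) else 0))"
    by (intro sum.cong refl) (auto simp: pairing sum_distrib_left intro!: sum.cong)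
  also have "\<dots> = (\<Sum>i\<in>UNIV. \<Sum>j\<in>?I. c j * Y j * (if lev i = l then of_int (kc j i) * of_real (w \<bullet> e i) else 0))"
    by (rule sum.swap)
  also have "\<dots> = 0"
  proof (rule sum.neutral, rule ballI)
    fix i :: 'n assume "i \<in> UNIV"
    have "(\<Sum>j\<in>?I. c j * Y j * (of_int (kc j i) * of_real (w \<bullet> e i)))
        = of_real (w \<bullet> e i) * (\<Sum>j\<in>?I. c j * of_int (kc j i) * Y j)"
      by (simp add: sum_distrib_left mult_ac)
    thus "(\<Sum>j\<in>?I. c j * Y j * (if lev i = l then of_int (kc j i) * of_real (w \<bullet> e i) else 0)) = 0"
      using crit_l[of i] by (cases "lev i = l") simp_all
  qed
  finally show ?thesis unfolding Y_def .
qed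

theorem lemma6p3:
  fixes N :: nat and v :: "nat \<Rightarrow> int^'n" and lam :: "nat \<Rightarrow> real"
    and u :: "real^'n" and m :: "int^'n"
  assumes "delzant N v lam"
    and "u \<in> interior (polyP N v lam)"
    and "strongly_bulk_balanced N v lam u"
  shows "u \<in> trop N v lam m"
proof (rule ccontr)
  assume "u \<notin> trop N v lam m"
  then obtain j0 where j0N: "j0 < N" and j0_pair: "(\<Sum>k\<in>UNIV. m $ k * v j0 $ k) \<noteq> 0"
    and others: "\<And>j. \<lbrakk>j < N; j \<noteq> j0; ell v lam j u \<le> ell v lam j0 u\<rbrakk> \<Longrightarrow> (\<Sum>k\<in>UNIV. m $ k * v j $ k) = 0"
    using unique_minimiser_if_notin_trop[OF assms(1)] by blast
  obtain l where lI: "Ilev N v lam u l = {j. j < N \<and> ell v lam j u = ell v lam j0 u}"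
    and lower: "\<And>r j. \<lbrakk>r < l; j \<in> Ilev N v lam u r\<rbrakk> \<Longrightarrow> ell v lam j u < ell v lam j0 u"
    using level_of_value[of "ell v lam j0 u"] j0N by blast
  obtain e lev kc c y where ab: "adapted_basis N v lam u e lev kc"
    and cne: "\<forall>j<N. c j \<noteq> 0" and yne: "\<forall>i. y i \<noteq> 0"
    and crit: "\<forall>i. y i * deriv (\<lambda>z. Fpot N v lam u kc (lev i) c (y(i := z))) (y i) = 0"
    using assms(3) unfolding strongly_bulk_balanced_def by blast
  define w :: "real^'n" where "w = (\<chi> k. real_of_int (m $ k))"
  define T where "T j = c j * (\<Prod>i\<in>UNIV. y i powi kc j i) * of_real (w \<bullet> vreal v j)" for j
  have pair_j0: "w \<bullet> vreal v j0 \<noteq> 0" using j0_pair unfolding w_def inner_vreal of_int_eq_0_iff .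
  have vanish: "w \<bullet> vreal v j = 0" if "j < N" "j \<noteq> j0" "ell v lam j u \<le> ell v lam j0 u" for j
    using others[OF that] unfolding w_def inner_vreal by simp
  have "w \<bullet> vreal v j = 0" if "r < l" "j \<in> Ilev N v lam u r" for r j
  proof (rule vanish)
    show "j < N" using that(2) Ilev_subset_lessThan by blast
  qed (use lower[OF that] in auto)
  hence "w \<bullet> e i = 0" if "lev i < l" for i
    using adapted_basis_orthogonal_below[OF ab _ that] by blast
  hence "(\<Sum>j\<in>Ilev N v lam u l. T j) = 0"
    unfolding T_def using critical_level_pairing_eq_0[OF ab yne crit] by blast
  moreover have "(\<Sum>j\<in>Ilev N v lam u l. T j) = T j0"
    using sum.mono_neutral_right[of _ "{j0}" T] j0N vanish unfolding lI T_def by auto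
  moreover have "T j0 \<noteq> 0" using j0N cne yne pair_j0 unfolding T_def by simp
  ultimately show False by simp
qed

end
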